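(* Let $\nu\geq\frac12$ and $0<B\leq\sqrt{\frac{\pi}{e}}$, and set $x_0:=\frac{\pi}{B^2}$. If $z>0$ satisfies $$2z\;\leq\;\log x_0-\log\log x_0+\frac12\,\frac{\log\log x_0}{\log x_0},$$ then $K_\nu(z)\geq K_{1/2}(z)\geq B$.
   Context: $K_\nu$ denotes the modified Bessel function of the second kind of real order $\nu$, for real argument $z>0$; in particular $K_{1/2}(z)=e^{-z}\sqrt{\pi/(2z)}$. *)

theory Defs
  imports "HOL-Analysis.Analysis"
begin

definition besselK :: "real \<Rightarrow> real \<Rightarrow> real" where
  "besselK \<nu> z = integral {0..} (\<lambda>t::real. exp (- z * cosh t) * cosh (\<nu> * t))"

end

theory Submission
  imports Defs "HOL-Probability.Distributions"
begin

text \<open>Since \<open>cosh\<close> is increasing on \<open>[0, \<infinity>)\<close>, the integral representation makes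
  \<open>K\<^sub>\<nu>(z)\<close> increasing in \<open>|\<nu>|\<close>. The substitution \<open>u = \<surd>(2z) sinh (t/2)\<close>, for which
  \<open>z cosh t = z + u\<^sup>2\<close>, turns \<open>K\<^sub>1\<^sub>/\<^sub>2(z)\<close> into a Gaussian integral and gives
  \<open>K\<^sub>1\<^sub>/\<^sub>2(z)\<^sup>2 = \<pi> / (2z e\<^sup>2\<^sup>z)\<close>. So \<open>K\<^sub>1\<^sub>/\<^sub>2(z) \<ge> B\<close> amounts to \<open>w e\<^sup>w \<le> x\<^sub>0\<close> for
  \<open>w = 2z\<close>, and with \<open>L = log x\<^sub>0\<close>, \<open>a = log L / L\<close> the right-hand side \<open>W\<close> of the
  hypothesis satisfies \<open>W e\<^sup>W = x\<^sub>0 (W/L) e\<^sup>a\<^sup>/\<^sup>2 \<le> x\<^sub>0 (1 - a/2) e\<^sup>a\<^sup>/\<^sup>2 \<le> x\<^sub>0\<close>.\<close>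

lemma exp_neg_le_power:
  fixes y :: real
  assumes "y > 0" "n > 0"
  shows "exp (- y) \<le> (real n / y) ^ n"
proof -
  have "(y / real n) ^ n \<le> (1 + y / real n) ^ n"
    using assms by (intro power_mono) auto
  also have "\<dots> \<le> exp y"
    using assms by (intro exp_ge_one_plus_x_over_n_power_n) auto
  finally have "inverse (exp y) \<le> inverse ((y / real n) ^ n)"
    using assms by (intro le_imp_inverse_le) auto
  thus ?thesis
    using assms by (simp add: exp_minus inverse_eq_divide power_divide)
qed

text \<open>The double exponential decay \<open>exp (- z e\<^sup>t / 2)\<close> beats any power of \<open>e\<^sup>t\<close>, which
  yields the integrable majorant \<open>C e\<^sup>-\<^sup>t\<close>.\<close>

lemma besselK_integrand_le_exp_neg:
  fixes \<nu> z :: real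
  assumes z: "z > 0"
  obtains C where "\<And>t. t \<ge> 0 \<Longrightarrow> exp (- z * cosh t) * cosh (\<nu> * t) \<le> C * exp (- t)"
proof
  define n where "n = nat \<lceil>\<bar>\<nu>\<bar>\<rceil> + 1"
  define C where "C = (2 * real n / z) ^ n"
  have n: "n > 0" "\<bar>\<nu>\<bar> \<le> real n - 1"
    unfolding n_def by auto
  fix t :: real
  assume t: "t \<ge> 0"
  have "exp (- z * cosh t) \<le> exp (- (z * exp t / 2))"
    using z by (simp add: cosh_def)
  also have "\<dots> \<le> (real n / (z * exp t / 2)) ^ n"
    using z n by (intro exp_neg_le_power) auto
  also have "\<dots> = C * exp (- t) ^ n"
    using z by (simp add: C_def exp_minus divide_simps power_mult_distrib)
  also have "\<dots> = C * exp (- (real n * t))"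
    by (simp add: exp_of_nat_mult[symmetric])
  finally have decay: "exp (- z * cosh t) \<le> C * exp (- (real n * t))" .
  have "cosh (\<nu> * t) \<le> exp \<bar>\<nu> * t\<bar>"
    by (simp add: cosh_def abs_if)
  also have "\<dots> \<le> exp ((real n - 1) * t)"
    using t n by (simp add: abs_mult mult_right_mono)
  finally have growth: "cosh (\<nu> * t) \<le> exp ((real n - 1) * t)" .
  have "exp (- z * cosh t) * cosh (\<nu> * t) \<le> C * exp (- (real n * t)) * exp ((real n - 1) * t)"
    using decay growth z by (intro mult_mono) (auto simp: C_def)
  also have "\<dots> = C * exp (- t)"
    by (simp add: mult.assoc exp_add[symmetric] algebra_simps)
  finally show "exp (- z * cosh t) * cosh (\<nu> * t) \<le> C * exp (- t)" .
qed

lemma besselK_integrand_absolutely_integrable: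
  fixes \<nu> z :: real
  assumes "z > 0"
  shows "(\<lambda>t. exp (- z * cosh t) * cosh (\<nu> * t)) absolutely_integrable_on {0..}"
proof -
  obtain C where C: "\<And>t. t \<ge> 0 \<Longrightarrow> exp (- z * cosh t) * cosh (\<nu> * t) \<le> C * exp (- t)"
    using besselK_integrand_le_exp_neg[OF assms] by blast
  show ?thesis
  proof (rule measurable_bounded_by_integrable_imp_absolutely_integrable)
    show "(\<lambda>t. exp (- z * cosh t) * cosh (\<nu> * t)) \<in> borel_measurable (lebesgue_on {0..})"
      by (intro continuous_imp_measurable_on_sets_lebesgue continuous_intros) auto
    show "(\<lambda>t. C * exp (- 1 * t)) integrable_on {0..}"
      by (intro integrable_on_mult_right integrable_on_exp_minus_to_infinity) simp
    show "norm (exp (- z * cosh t) * cosh (\<nu> * t)) \<le> C * exp (- 1 * t)" if "t \<in> {0..}" for t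
      using C[of t] that by (simp add: abs_mult)
  qed simp
qed

lemma besselK_integrand_integrable:
  fixes \<nu> z :: real
  assumes "z > 0"
  shows "(\<lambda>t. exp (- z * cosh t) * cosh (\<nu> * t)) integrable_on {0..}"
  using besselK_integrand_absolutely_integrable[OF assms] set_lebesgue_integral_eq_integral(1)
  by blast

lemma besselK_integrand_set_integrable_lborel:
  fixes \<nu> z :: real
  assumes "z > 0"
  shows "set_integrable lborel {0<..} (\<lambda>t. exp (- z * cosh t) * cosh (\<nu> * t))"
proof -
  let ?F = "\<lambda>t. exp (- z * cosh t) * cosh (\<nu> * t)"
  have "set_integrable lebesgue {0<..} ?F"
    by (rule set_integrable_subset[OF besselK_integrand_absolutely_integrable[OF assms]]) auto
  moreover have "?F \<in> borel_measurable borel"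
    by (intro borel_measurable_continuous_onI continuous_intros)
  ultimately show ?thesis
    using integrable_completion[of "\<lambda>t. indicator {0<..} t *\<^sub>R ?F t" lborel]
    by (simp add: set_integrable_def)
qed

lemma besselK_mono_abs:
  fixes \<mu> \<nu> z :: real
  assumes "z > 0" "\<bar>\<mu>\<bar> \<le> \<bar>\<nu>\<bar>"
  shows "besselK \<mu> z \<le> besselK \<nu> z"
  unfolding besselK_def
proof (rule integral_le[OF besselK_integrand_integrable besselK_integrand_integrable])
  fix t :: real
  assume "t \<in> {0..}"
  hence "\<bar>\<mu> * t\<bar> \<le> \<bar>\<nu> * t\<bar>"
    using assms by (simp add: abs_mult mult_right_mono)
  hence "cosh \<bar>\<mu> * t\<bar> \<le> cosh \<bar>\<nu> * t\<bar>"
    by (subst cosh_real_nonneg_le_iff) auto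
  thus "exp (- z * cosh t) * cosh (\<mu> * t) \<le> exp (- z * cosh t) * cosh (\<nu> * t)"
    by (intro mult_left_mono) auto
qed (use assms in auto)

lemma integral_Ioi_eq_integral_Ici:
  "integral {0<..} f = integral {0::real..} (f :: real \<Rightarrow> real)"
  by (rule integral_spike_set; rule negligible_subset[of "{0}"]) auto

lemma integral_exp_neg_square_nonneg_reals:
  "integral {0::real..} (\<lambda>x. exp (- x\<^sup>2)) = sqrt pi / 2"
proof -
  have "set_integrable lborel {0::real..} (\<lambda>x. exp (- x\<^sup>2))"
       "(LINT x:{0::real..}|lborel. exp (- x\<^sup>2)) = sqrt pi / 2"
    using gaussian_moment_0
    unfolding set_integrable_def set_lebesgue_integral_def has_bochner_integral_iff by auto
  thus ?thesis
    using set_borel_integral_eq_integral(2) by metis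
qed

lemma integral_gaussian_sinh_half_substitution:
  fixes s :: real
  assumes s: "s > 0"
    and integrable: "set_integrable lborel {0<..}
                (\<lambda>t. exp (- (s * sinh (t/2))\<^sup>2) * (s/2 * cosh (t/2)))"
  shows "integral {0<..} (\<lambda>t. exp (- (s * sinh (t/2))\<^sup>2) * (s/2 * cosh (t/2))) = sqrt pi / 2"
proof -
  define g where "g = (\<lambda>t. s * sinh (t/2))"
  define g' where "g' = (\<lambda>t. s/2 * cosh (t/2))"
  have int': "set_integrable lborel (einterval 0 \<infinity>) (\<lambda>t. exp (- (g t)\<^sup>2) * g' t)"
    using integrable by (simp add: g_def g'_def zero_ereal_def)
  have "filterlim (\<lambda>t::real. t / 2) at_top at_top"
    using filterlim_tendsto_pos_mult_at_top[OF tendsto_const[of "1/2::real"] _ filterlim_ident]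
    by simp
  hence "filterlim (\<lambda>t. s * sinh (t/2)) at_top at_top"
    using s by (intro filterlim_tendsto_pos_mult_at_top[OF tendsto_const]
        filterlim_compose[OF sinh_real_at_top]) auto
  hence lim_top: "((ereal \<circ> g \<circ> real_of_ereal) \<longlongrightarrow> \<infinity>) (at_left \<infinity>)"
    by (simp add: ereal_tendsto_simps g_def)
  have lim_zero: "((ereal \<circ> g \<circ> real_of_ereal) \<longlongrightarrow> 0) (at_right 0)"
    by (auto simp: zero_ereal_def ereal_tendsto_simps g_def intro!: tendsto_eq_intros)
  have g_deriv: "DERIV g t :> g' t" for t
    unfolding g_def g'_def by (auto intro!: derivative_eq_intros)
  note subst = interval_integral_substitution_nonneg[where a=0 and b=\<infinity> and g=g and g'=g'
      and f="\<lambda>x. exp (- x\<^sup>2)" and A=0 and B=\<infinity>, OF _ g_deriv _ _ _ _ lim_zero lim_top int']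
  have gauss_int: "set_integrable lborel (einterval 0 \<infinity>) (\<lambda>x::real. exp (- x\<^sup>2))"
    by (rule subst(1)) (use s in \<open>auto simp: g'_def intro!: continuous_intros\<close>)
  have gauss_eq: "(LBINT x=0..\<infinity>. exp (- x\<^sup>2)) = (LBINT t=0..\<infinity>. exp (- (g t)\<^sup>2) * g' t)"
    by (rule subst(2)) (use s in \<open>auto simp: g'_def intro!: continuous_intros\<close>)
  have "integral {0<..} (\<lambda>t. exp (- (g t)\<^sup>2) * g' t) = (LBINT t=0..\<infinity>. exp (- (g t)\<^sup>2) * g' t)"
    using int' by (subst interval_integral_eq_integral') (auto simp: zero_ereal_def)
  also have "\<dots> = (LBINT x=0..\<infinity>. exp (- x\<^sup>2))"
    by (rule gauss_eq[symmetric])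
  also have "\<dots> = integral {0<..} (\<lambda>x::real. exp (- x\<^sup>2))"
    using gauss_int by (subst interval_integral_eq_integral') (auto simp: zero_ereal_def)
  also have "\<dots> = sqrt pi / 2"
    by (simp add: integral_Ioi_eq_integral_Ici integral_exp_neg_square_nonneg_reals)
  finally show ?thesis
    by (simp add: g_def g'_def)
qed

lemma besselK_half:
  fixes z :: real
  assumes z: "z > 0"
  shows "besselK (1/2) z = exp (- z) * sqrt (pi / (2 * z))"
proof -
  define s where "s = sqrt (2 * z)"
  define F where "F = (\<lambda>t. exp (- z * cosh t) * cosh ((1/2) * t))"
  have s: "s > 0" "s\<^sup>2 = 2 * z"
    using z by (auto simp: s_def)
  have substituted: "exp (- (s * sinh (t/2))\<^sup>2) * (s/2 * cosh (t/2)) = (s/2 * exp z) * F t" for t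
  proof -
    have "cosh t = 1 + 2 * (sinh (t/2))\<^sup>2"
      using cosh_double[of "t/2"] cosh_square_eq[of "t/2"] by simp
    hence "- (s * sinh (t/2))\<^sup>2 = z + (- z * cosh t)"
      using s by (simp add: power_mult_distrib algebra_simps)
    hence "exp (- (s * sinh (t/2))\<^sup>2) = exp z * exp (- z * cosh t)"
      by (simp only: exp_add)
    thus ?thesis
      by (simp add: F_def mult_ac)
  qed
  have "set_integrable lborel {0<..} (\<lambda>t. (s/2 * exp z) * F t)"
    unfolding F_def by (intro set_integrable_mult_right besselK_integrand_set_integrable_lborel z)
  hence "set_integrable lborel {0<..} (\<lambda>t. exp (- (s * sinh (t/2))\<^sup>2) * (s/2 * cosh (t/2)))"
    unfolding substituted .
  from integral_gaussian_sinh_half_substitution[OF s(1) this]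
  have "integral {0<..} (\<lambda>t. (s/2 * exp z) * F t) = sqrt pi / 2"
    unfolding substituted .
  hence "(s/2 * exp z) * integral {0..} F = sqrt pi / 2"
    by (simp add: integral_Ioi_eq_integral_Ici)
  hence "integral {0..} F = sqrt pi / (s * exp z)"
    using s by (simp add: field_simps)
  moreover have "sqrt (pi / (2 * z)) = sqrt pi / s"
    by (simp add: s_def real_sqrt_divide)
  ultimately show ?thesis
    by (simp add: besselK_def F_def exp_minus field_simps)
qed

lemma besselK_half_ge_iff:
  fixes B z :: real
  assumes "z > 0" "B > 0"
  shows "B \<le> besselK (1/2) z \<longleftrightarrow> 2 * z * exp (2 * z) \<le> pi / B\<^sup>2"
proof -
  have "exp (2 * z) = exp z * exp z"
    by (simp add: exp_double power2_eq_square)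
  hence "(besselK (1/2) z)\<^sup>2 = pi / (2 * z * exp (2 * z))"
    using assms by (simp add: besselK_half power_mult_distrib exp_minus power2_eq_square field_simps)
  moreover have "besselK (1/2) z \<ge> 0"
    using assms by (simp add: besselK_half)
  ultimately have "B \<le> besselK (1/2) z \<longleftrightarrow> B\<^sup>2 \<le> pi / (2 * z * exp (2 * z))"
    using assms by (metis abs_of_nonneg less_imp_le real_le_rsqrt real_sqrt_le_iff
        sqrt_le_D real_sqrt_abs)
  also have "\<dots> \<longleftrightarrow> 2 * z * exp (2 * z) \<le> pi / B\<^sup>2"
    using assms by (simp add: field_simps)
  finally show ?thesis .
qed

lemma mult_exp_le_if_le_ln_minus_ln_ln:
  fixes x w :: real
  assumes x: "exp 1 \<le> x" and w: "0 \<le> w"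
    and w_le: "w \<le> ln x - ln (ln x) + (1/2) * (ln (ln x) / ln x)"
  shows "w * exp w \<le> x"
proof -
  define L where "L = ln x"
  define a where "a = ln L / L"
  define W where "W = L - ln L + (1/2) * a"
  have x_pos: "x > 0"
    using x exp_gt_zero[of 1] by linarith
  have L: "L \<ge> 1"
    using ln_le_cancel_iff[of "exp 1" x] x x_pos by (simp add: L_def)
  have a: "a \<ge> 0"
    unfolding a_def using L by (intro divide_nonneg_nonneg) auto
  have exp_L: "exp L = x"
    using x_pos by (simp add: L_def)
  have "a / (2 * L) \<le> a / 2"
    using a L by (intro divide_left_mono) auto
  have "w \<le> W"
    using w_le unfolding W_def a_def L_def .
  hence "w * exp w \<le> W * exp W"
    using w by (intro mult_mono) auto
  also have "exp W = x / L * exp (a/2)"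
    using L by (simp add: W_def exp_add exp_diff exp_L)
  also have "W * (x / L * exp (a/2)) = x * (1 - a + a / (2 * L)) * exp (a/2)"
    using L by (simp add: W_def a_def field_simps)
  also have "\<dots> \<le> x * ((1 - a/2) * exp (a/2))"
    using \<open>a / (2 * L) \<le> a / 2\<close> x_pos by (simp add: mult.assoc mult_left_mono)
  also have "\<dots> \<le> x * (exp (- (a/2)) * exp (a/2))"
    using exp_ge_add_one_self[of "- (a/2)"] x_pos by (intro mult_left_mono mult_right_mono) auto
  also have "\<dots> = x"
    by (simp add: exp_minus)
  finally show ?thesis .
qed

theorem proposition4:
  fixes \<nu> B z :: real
  assumes "\<nu> \<ge> 1/2"
    and "0 < B" and "B \<le> sqrt (pi / exp 1)"
    and "z > 0"
    and "2 * z \<le> ln (pi / B^2) - ln (ln (pi / B^2))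
                 + (1/2) * (ln (ln (pi / B^2)) / ln (pi / B^2))"
  shows "besselK \<nu> z \<ge> besselK (1/2) z \<and> besselK (1/2) z \<ge> B"
proof
  show "besselK \<nu> z \<ge> besselK (1/2) z"
    using assms(1,4) by (intro besselK_mono_abs) auto
  have "B\<^sup>2 \<le> pi / exp 1"
    using assms(2,3) by (metis less_imp_le pi_ge_zero divide_nonneg_nonneg exp_ge_zero
        real_sqrt_le_iff real_sqrt_pow2 power_mono)
  hence "exp 1 \<le> pi / B\<^sup>2"
    using assms(2) by (simp add: field_simps)
  hence "2 * z * exp (2 * z) \<le> pi / B\<^sup>2"
    using assms(4,5) by (intro mult_exp_le_if_le_ln_minus_ln_ln) auto
  thus "besselK (1/2) z \<ge> B"
    using besselK_half_ge_iff assms(2,4) by blast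
qed

end
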